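(* Let $X$ be a $\mathbf D([0,1),E)$-valued random element whose jump positions $0<Y_1<\dots<Y_{N_X}<1$ form a homogeneous Poisson point process on $[0,1)$ of intensity $\lambda>0$. Let $k\ge1$ and $(I_1,\dots,I_k)\in\mathrm{im}(\pi_k)$. Conditionally on the event $\{N_X=k,\ \pi_k(Y_1,\dots,Y_k)=(I_1,\dots,I_k)\}$, the vector $(Y_1,\dots,Y_k)$ has the same distribution as $(U_1,\dots,U_k)$, where $U_1,\dots,U_k$ are independent and $U_i$ is uniformly distributed on $I_i$.
   Context: $\mathbf D([0,1),E)$ is the space of piecewise constant functions $[0,1)\to E$ with finitely many jumps. Dyadic intervals of level $m$: $[(j-1)2^{-m},j2^{-m})$, $j=1,\dots,2^m$. For distinct $t_1,\dots,t_k\in[0,1)$ build a finite binary tree: the root is $[0,1)$; a node $I$ (a dyadic interval of level $m$) containing at least two of the points $t_i$ gets as children the two dyadic intervals of level $m+1$ contained in $I$; a node containing $0$ or $1$ of the points is a leaf. $\pi_k(t_1,\dots,t_k)=(I_1,\dots,I_k)$ is the list of the $k$ leaves containing exactly one point, arranged in their natural left-to-right order; $\mathrm{im}(\pi_k)$ is the set of all such lists. *)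

theory Defs
  imports "HOL-Probability.Probability"
begin

text \<open>Piecewise constant functions on [0,1) with finitely many jumps: the space D([0,1),E).
  Only the restriction to [0,1) matters.\<close>
definition Dspace :: "(real \<Rightarrow> 'e) set" where
  "Dspace = {f. \<exists>S. finite S \<and> S \<subseteq> {0<..<1} \<and>
      (\<forall>s t. 0 \<le> s \<and> s \<le> t \<and> t < 1 \<and> S \<inter> {s<..t} = {} \<longrightarrow> f s = f t)}"

definition jumps :: "(real \<Rightarrow> 'e) \<Rightarrow> real set" where
  "jumps f = {t \<in> {0<..<1}. \<forall>e>0. \<exists>s. t - e < s \<and> s < t \<and> f s \<noteq> f t}"

text \<open>Number of jumps N_X and the ordered jump positions Y_1 < ... < Y_{N_X}
  (as a 0-indexed list).\<close>
definition njumps :: "(real \<Rightarrow> 'e) \<Rightarrow> nat" where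
  "njumps f = card (jumps f)"

definition jump_list :: "(real \<Rightarrow> 'e) \<Rightarrow> real list" where
  "jump_list f = sorted_list_of_set (jumps f)"

definition dyadic :: "nat \<Rightarrow> nat \<Rightarrow> real set" where
  "dyadic m j = {(real j - 1) / 2 ^ m ..< real j / 2 ^ m}"

definition is_dyadic :: "nat \<Rightarrow> real set \<Rightarrow> bool" where
  "is_dyadic m I \<longleftrightarrow> (\<exists>j. 1 \<le> j \<and> j \<le> 2 ^ m \<and> I = dyadic m j)"

text \<open>Nodes of the binary tree built from the points ts: the root [0,1) is a node, and
  a dyadic interval of level m+1 is a node iff its parent (the level-m dyadic interval
  containing it) is a node containing at least two of the points. Unfolded: a dyadic
  interval of level m is a node iff every dyadic interval of strictly smaller level
  containing it contains at least two of the points.\<close>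
definition tree_node :: "real list \<Rightarrow> real set \<Rightarrow> bool" where
  "tree_node ts I \<longleftrightarrow> (\<exists>m. is_dyadic m I \<and>
      (\<forall>m' J. m' < m \<and> is_dyadic m' J \<and> I \<subseteq> J \<longrightarrow> 2 \<le> card (set ts \<inter> J)))"

text \<open>Leaves containing exactly one point (a node with exactly one point is a leaf).\<close>
definition one_point_leaves :: "real list \<Rightarrow> real set set" where
  "one_point_leaves ts = {I. tree_node ts I \<and> card (set ts \<inter> I) = 1}"

definition pi_k :: "nat \<Rightarrow> real list \<Rightarrow> real set list" where
  "pi_k k ts = (THE L. distinct L \<and> set L = one_point_leaves ts \<and>
      sorted_wrt (\<lambda>A B. \<forall>a\<in>A. \<forall>b\<in>B. a < b) L)"

definition im_pi :: "nat \<Rightarrow> real set list set" where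
  "im_pi k = {pi_k k ts | ts. length ts = k \<and> distinct ts \<and> set ts \<subseteq> {0..<1}}"

definition poisson_pp :: "'a measure \<Rightarrow> real \<Rightarrow> ('a \<Rightarrow> real set) \<Rightarrow> bool" where
  "poisson_pp M lam P \<longleftrightarrow> prob_space M \<and>
     (\<forall>\<omega>\<in>space M. finite (P \<omega>) \<and> P \<omega> \<subseteq> {0..<1}) \<and>
     (\<forall>A\<in>sets borel. A \<subseteq> {0..<1} \<longrightarrow>
        (\<lambda>\<omega>. card (P \<omega> \<inter> A)) \<in> measurable M (count_space UNIV) \<and>
        (\<forall>n. measure M {\<omega>\<in>space M. card (P \<omega> \<inter> A) = n} =
              (lam * measure lborel A) ^ n / fact n * exp (- lam * measure lborel A))) \<and>
     (\<forall>(As :: nat \<Rightarrow> real set) n. (\<forall>i<n. As i \<in> sets borel \<and> As i \<subseteq> {0..<1}) \<and>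
        disjoint_family_on As {..<n} \<longrightarrow>
        prob_space.indep_vars M (\<lambda>_. count_space UNIV) (\<lambda>i \<omega>. card (P \<omega> \<inter> As i)) {..<n})"

end

theory Submission
  imports Defs
begin

text \<open>Given the tree built from points t_1 < ... < t_k, the leaf of t_i is the first dyadic cell
  around t_i containing no other point, and moving every point anywhere inside its own leaf does
  not change the tree. Hence pi_k(Y) = (I_1, ..., I_k) holds exactly when the i-th jump lies in I_i,
  i.e. when each I_i contains exactly one point of the process and the rest of [0,1) contains none.
  By independence of Poisson counts on disjoint sets, for Borel B_i \<subseteq> I_i this event with I_i
  replaced by B_i has probability \<lambda>^k |B_1| ... |B_k| e^-\<lambda>, so conditioning on the event for
  the I_i gives the product of the uniform distributions on the I_i.\<close>

section \<open>Dyadic cells and leaves\<close>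

definition dyadic_cell :: "nat \<Rightarrow> real \<Rightarrow> real set" where
  "dyadic_cell m t = {y. \<lfloor>y * 2^m\<rfloor> = \<lfloor>t * 2^m\<rfloor>}"

lemma dyadic_cell_self [simp]: "t \<in> dyadic_cell m t"
  by (simp add: dyadic_cell_def)

lemma mem_dyadic_cell_iff: "x \<in> dyadic_cell m t \<longleftrightarrow> dyadic_cell m x = dyadic_cell m t"
  by (auto simp: dyadic_cell_def)

lemma mem_dyadic_cell_commute: "x \<in> dyadic_cell m t \<longleftrightarrow> t \<in> dyadic_cell m x"
  by (auto simp: dyadic_cell_def)

lemma floor_mult_power2_div:
  assumes "m \<le> m'"
  shows "\<lfloor>(y::real) * 2^m\<rfloor> = \<lfloor>y * 2^m'\<rfloor> div 2^(m'-m)"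
proof -
  have "(2::real)^m' = 2^m * 2^(m'-m)"
    using assms by (simp flip: power_add)
  then have "y * 2^m = y * 2^m' / real_of_int (2^(m'-m))"
    by simp
  then show ?thesis
    by (simp add: floor_divide_real_eq_div del: of_int_power)
qed

lemma dyadic_cell_mono: "m \<le> m' \<Longrightarrow> dyadic_cell m' t \<subseteq> dyadic_cell m t"
  unfolding dyadic_cell_def using floor_mult_power2_div by auto

lemma dyadic_cell_eq_atLeastLessThan:
  "dyadic_cell m t = {real_of_int \<lfloor>t * 2^m\<rfloor> / 2^m ..< (real_of_int \<lfloor>t * 2^m\<rfloor> + 1) / 2^m}"
proof (rule set_eqI)
  fix y
  have pos: "(0::real) < 2^m" by simp
  have "y \<in> dyadic_cell m t \<longleftrightarrow>
      real_of_int \<lfloor>t * 2^m\<rfloor> \<le> y * 2^m \<and> y * 2^m < real_of_int \<lfloor>t * 2^m\<rfloor> + 1"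
    unfolding dyadic_cell_def by (simp add: floor_eq_iff)
  also have "\<dots> \<longleftrightarrow> y \<in> {real_of_int \<lfloor>t * 2^m\<rfloor> / 2^m ..< (real_of_int \<lfloor>t * 2^m\<rfloor> + 1) / 2^m}"
    unfolding atLeastLessThan_iff pos_divide_le_eq[OF pos] pos_less_divide_eq[OF pos] ..
  finally show "y \<in> dyadic_cell m t \<longleftrightarrow>
      y \<in> {real_of_int \<lfloor>t * 2^m\<rfloor> / 2^m ..< (real_of_int \<lfloor>t * 2^m\<rfloor> + 1) / 2^m}" .
qed

lemma dyadic_cell_in_borel [measurable]: "dyadic_cell m t \<in> sets borel"
  by (simp add: dyadic_cell_eq_atLeastLessThan)

lemma measure_dyadic_cell: "measure lborel (dyadic_cell m t) = 1 / 2^m"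
proof -
  have "real_of_int \<lfloor>t * 2^m\<rfloor> / 2^m \<le> (real_of_int \<lfloor>t * 2^m\<rfloor> + 1) / 2^m"
    by (simp add: divide_right_mono)
  then show ?thesis
    by (simp add: dyadic_cell_eq_atLeastLessThan diff_divide_distrib[symmetric])
qed

lemma is_dyadic_dyadic_cell:
  assumes "0 \<le> t" "t < 1"
  shows "is_dyadic m (dyadic_cell m t)"
proof -
  define c where "c = \<lfloor>t * 2^m\<rfloor>"
  have "0 \<le> c" "c < 2^m"
    using assms by (simp_all add: c_def floor_less_iff)
  define j where "j = nat c + 1"
  have jc: "int j = c + 1"
    using \<open>0 \<le> c\<close> by (simp add: j_def)
  then have "real j = real_of_int c + 1"
    by (metis of_int_of_nat_eq of_int_add of_int_1)
  then have "dyadic_cell m t = dyadic m j"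
    unfolding dyadic_cell_eq_atLeastLessThan dyadic_def c_def[symmetric] by simp
  moreover have "j \<le> 2^m"
  proof -
    have "int j \<le> 2^m"
      using jc \<open>c < 2^m\<close> by simp
    then show ?thesis
      by (metis of_nat_le_iff of_nat_numeral of_nat_power)
  qed
  ultimately show ?thesis
    unfolding is_dyadic_def j_def by auto
qed

lemma is_dyadic_eq_dyadic_cell:
  assumes "is_dyadic m I" "t \<in> I"
  shows "I = dyadic_cell m t"
proof -
  obtain j where j: "1 \<le> j" "I = dyadic m j"
    using assms unfolding is_dyadic_def by blast
  have "real j - 1 \<le> t * 2^m \<and> t * 2^m < real j"
    using assms(2) j by (auto simp: dyadic_def field_simps)
  then have "\<lfloor>t * 2^m\<rfloor> = int j - 1"
    by (simp add: floor_eq_iff)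
  then have "real_of_int \<lfloor>t * 2^m\<rfloor> = real j - 1"
    by simp
  then show ?thesis
    using j unfolding dyadic_cell_eq_atLeastLessThan dyadic_def by simp
qed

lemma dyadic_cell_subset_unit:
  assumes "0 \<le> t" "t < 1"
  shows "dyadic_cell m t \<subseteq> {0..<1}"
proof -
  obtain j where j: "1 \<le> j" "j \<le> 2^m" "dyadic_cell m t = dyadic m j"
    using is_dyadic_dyadic_cell[OF assms] is_dyadic_def by blast
  have "real j \<le> 2^m"
    using j(2) by (metis of_nat_le_iff of_nat_numeral of_nat_power)
  then have "real j / 2^m \<le> 1" "0 \<le> (real j - 1) / 2^m"
    using j(1) by simp_all
  then show ?thesis
    using j(3) unfolding dyadic_def by auto
qed

lemma dyadic_cell_separates:
  assumes "s \<noteq> t"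
  obtains m where "s \<notin> dyadic_cell m t"
proof -
  obtain m where m: "(1/2::real)^m < \<bar>s - t\<bar>"
    using real_arch_pow_inv[of "\<bar>s - t\<bar>" "1/2"] assms by auto
  have "s \<notin> dyadic_cell m t"
  proof
    assume "s \<in> dyadic_cell m t"
    then have "\<lfloor>s * 2^m\<rfloor> = \<lfloor>t * 2^m\<rfloor>"
      by (simp add: dyadic_cell_def)
    then have "\<bar>s * 2^m - t * 2^m\<bar> < 1"
      by linarith
    then have "\<bar>s - t\<bar> < (1/2)^m"
      by (simp add: abs_mult power_one_over pos_less_divide_eq flip: left_diff_distrib)
    with m show False by simp
  qed
  then show thesis ..
qed

lemma dyadic_cell_isolates:
  assumes "finite S"
  obtains m where "S \<inter> dyadic_cell m t \<subseteq> {t}"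
proof -
  have "\<forall>s\<in>S - {t}. \<exists>m. s \<notin> dyadic_cell m t"
    using dyadic_cell_separates by (metis Diff_iff singletonI)
  then obtain f where f: "\<And>s. s \<in> S - {t} \<Longrightarrow> s \<notin> dyadic_cell (f s) t"
    by metis
  define m where "m = Max (insert 0 (f ` (S - {t})))"
  have "s \<notin> dyadic_cell m t" if "s \<in> S - {t}" for s
  proof -
    have "f s \<le> m"
      using assms that unfolding m_def by (intro Max_ge) auto
    then show ?thesis
      using f[OF that] dyadic_cell_mono by blast
  qed
  then show thesis
    using that by blast
qed

text \<open>For t \<in> S, leaf S t is the leaf containing t of the dyadic tree built from S.\<close>

definition leaf_level :: "real set \<Rightarrow> real \<Rightarrow> nat" where
  "leaf_level S t = (LEAST m. card (S \<inter> dyadic_cell m t) \<le> 1)"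

definition leaf :: "real set \<Rightarrow> real \<Rightarrow> real set" where
  "leaf S t = dyadic_cell (leaf_level S t) t"

lemma card_leaf:
  assumes "finite S" "t \<in> S"
  shows "card (S \<inter> leaf S t) = 1"
proof -
  obtain m where "S \<inter> dyadic_cell m t \<subseteq> {t}"
    using dyadic_cell_isolates assms(1) by blast
  then have "card (S \<inter> dyadic_cell m t) \<le> 1"
    using card_mono[of "{t}"] by fastforce
  then have "card (S \<inter> leaf S t) \<le> 1"
    unfolding leaf_def leaf_level_def by (rule LeastI)
  moreover have "t \<in> S \<inter> leaf S t"
    using assms by (simp add: leaf_def)
  then have "0 < card (S \<inter> leaf S t)"
    using assms(1) by (auto simp: card_gt_0_iff)
  ultimately show ?thesis by linarith
qed

lemma card_dyadic_cell_below_leaf_level: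
  "m < leaf_level S t \<Longrightarrow> 2 \<le> card (S \<inter> dyadic_cell m t)"
  using not_less_Least[of m "\<lambda>m. card (S \<inter> dyadic_cell m t) \<le> 1"]
  by (simp add: leaf_level_def)

lemma leaf_inter_eq_singleton:
  assumes "finite S" "t \<in> S"
  shows "S \<inter> leaf S t = {t}"
  using card_leaf[OF assms] assms(2)
  by (metis IntI card_1_singletonE dyadic_cell_self leaf_def singletonD)

lemma mem_leaf_eq:
  "finite S \<Longrightarrow> t \<in> S \<Longrightarrow> t' \<in> S \<Longrightarrow> t' \<in> leaf S t \<Longrightarrow> t' = t"
  using leaf_inter_eq_singleton by blast

lemma leaf_less:
  assumes "finite S" "t \<in> S" "t' \<in> S" "t < t'" "a \<in> leaf S t" "b \<in> leaf S t'"
  shows "a < b"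
proof -
  define m where "m = min (leaf_level S t) (leaf_level S t')"
  have a: "a \<in> dyadic_cell m t"
    using assms(5) dyadic_cell_mono[of m "leaf_level S t" t] by (auto simp: leaf_def m_def)
  have b: "b \<in> dyadic_cell m t'"
    using assms(6) dyadic_cell_mono[of m "leaf_level S t'" t'] by (auto simp: leaf_def m_def)
  text \<open>At the coarser of the two leaf levels, t and t' already lie in different cells.\<close>
  have "t' \<notin> dyadic_cell m t"
  proof
    assume t': "t' \<in> dyadic_cell m t"
    show False
    proof (cases "m = leaf_level S t")
      case True
      then show False
        using t' mem_leaf_eq[OF assms(1,2,3)] assms(4) by (simp add: leaf_def)
    next
      case False
      then have "t \<in> leaf S t'"
        using t' by (simp add: leaf_def m_def min_def mem_dyadic_cell_commute split: if_splits)
      then show False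
        using mem_leaf_eq[OF assms(1,3,2)] assms(4) by simp
    qed
  qed
  moreover have "\<lfloor>t * 2^m\<rfloor> \<le> \<lfloor>t' * 2^m\<rfloor>"
    using assms(4) by (intro floor_mono) simp
  ultimately have "\<lfloor>a * 2^m\<rfloor> < \<lfloor>b * 2^m\<rfloor>"
    using a b by (simp add: dyadic_cell_def)
  then have "a * 2^m < b * 2^m"
    by (metis floor_mono not_le)
  then show ?thesis by simp
qed

section \<open>The map pi_k\<close>

lemma leaf_mem_one_point_leaves:
  assumes "set ts \<subseteq> {0..<1}" "t \<in> set ts"
  shows "leaf (set ts) t \<in> one_point_leaves ts"
proof -
  have "tree_node ts (leaf (set ts) t)"
    unfolding tree_node_def
  proof (intro exI conjI allI impI)
    show "is_dyadic (leaf_level (set ts) t) (leaf (set ts) t)"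
      unfolding leaf_def using assms by (intro is_dyadic_dyadic_cell) auto
    fix m J
    assume "m < leaf_level (set ts) t \<and> is_dyadic m J \<and> leaf (set ts) t \<subseteq> J"
    moreover from this have "J = dyadic_cell m t"
      by (intro is_dyadic_eq_dyadic_cell) (auto simp: leaf_def)
    ultimately show "2 \<le> card (set ts \<inter> J)"
      using card_dyadic_cell_below_leaf_level by simp
  qed
  then show ?thesis
    using card_leaf[OF _ assms(2)] unfolding one_point_leaves_def by simp
qed

lemma one_point_leaves_eq_leaf:
  assumes "set ts \<subseteq> {0..<1}" "I \<in> one_point_leaves ts"
  obtains t where "t \<in> set ts" "I = leaf (set ts) t"
proof -
  obtain m where m: "is_dyadic m I"
    and above: "\<And>m' J. m' < m \<Longrightarrow> is_dyadic m' J \<Longrightarrow> I \<subseteq> J \<Longrightarrow> 2 \<le> card (set ts \<inter> J)"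
    and card: "card (set ts \<inter> I) = 1"
    using assms(2) unfolding one_point_leaves_def tree_node_def by blast
  obtain t where t: "set ts \<inter> I = {t}"
    using card by (meson card_1_singletonE)
  then have "t \<in> set ts" "t \<in> I" by auto
  then have I: "I = dyadic_cell m t"
    using is_dyadic_eq_dyadic_cell m by blast
  have "leaf_level (set ts) t = m"
    unfolding leaf_level_def
  proof (rule Least_equality)
    show "card (set ts \<inter> dyadic_cell m t) \<le> 1"
      using card I by simp
    fix m' assume m': "card (set ts \<inter> dyadic_cell m' t) \<le> 1"
    show "m \<le> m'"
    proof (rule ccontr)
      assume "\<not> m \<le> m'"
      moreover have "is_dyadic m' (dyadic_cell m' t)"
        using assms(1) \<open>t \<in> set ts\<close> by (intro is_dyadic_dyadic_cell) auto
      moreover have "I \<subseteq> dyadic_cell m' t"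
        using I \<open>\<not> m \<le> m'\<close> by (simp add: dyadic_cell_mono)
      ultimately have "2 \<le> card (set ts \<inter> dyadic_cell m' t)"
        by (intro above) auto
      with m' show False by simp
    qed
  qed
  then show thesis
    using that \<open>t \<in> set ts\<close> I by (simp add: leaf_def)
qed

lemma sorted_wrt_asym_unique:
  assumes "sorted_wrt R xs" "sorted_wrt R ys" "set xs = set ys" "distinct xs" "distinct ys"
    and asym: "\<And>a b. a \<in> set xs \<Longrightarrow> b \<in> set xs \<Longrightarrow> R a b \<Longrightarrow> R b a \<Longrightarrow> False"
  shows "xs = ys"
  using assms
proof (induction xs arbitrary: ys)
  case Nil
  then show ?case by simp
next
  case (Cons x xs)
  then obtain y ys' where ys: "ys = y # ys'"
    by (cases ys) auto
  show ?case
  proof (cases "x = y")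
    case True
    then have "set xs = set ys'"
      using Cons.prems ys by (metis Diff_insert_absorb distinct.simps(2) list.simps(15))
    then show ?thesis
      using Cons ys True by auto
  next
    case False
    then have "y \<in> set xs" "x \<in> set ys'"
      using Cons.prems(3) ys by (metis list.set_intros(1) set_ConsD)+
    then have "R x y" "R y x"
      using Cons.prems(1,2) ys by auto
    then show ?thesis
      using Cons.prems(6)[of x y] \<open>y \<in> set xs\<close> by auto
  qed
qed

lemma pi_k_eq_map_leaf:
  assumes "set ts \<subseteq> {0..<1}"
  shows "pi_k k ts = map (leaf (set ts)) (sorted_list_of_set (set ts))"
proof -
  let ?R = "\<lambda>A B. \<forall>a\<in>A. \<forall>b\<in>B. (a::real) < b"
  let ?L = "map (leaf (set ts)) (sorted_list_of_set (set ts))"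
  have "inj_on (leaf (set ts)) (set ts)"
    by (rule inj_onI) (metis dyadic_cell_self leaf_def List.finite_set mem_leaf_eq)
  then have "distinct ?L"
    by (simp add: distinct_map)
  moreover have "set ?L = one_point_leaves ts"
  proof
    show "set ?L \<subseteq> one_point_leaves ts"
      using leaf_mem_one_point_leaves[OF assms] by auto
    show "one_point_leaves ts \<subseteq> set ?L"
      by (auto elim!: one_point_leaves_eq_leaf[OF assms])
  qed
  moreover have "sorted_wrt ?R ?L"
    unfolding sorted_wrt_map
    by (rule sorted_wrt_mono_rel[OF _ strict_sorted_list_of_set])
      (auto intro: leaf_less[of "set ts"])
  ultimately have L: "distinct ?L \<and> set ?L = one_point_leaves ts \<and> sorted_wrt ?R ?L"
    by blast
  have nonempty: "A \<noteq> {}" if "A \<in> one_point_leaves ts" for A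
    using that unfolding one_point_leaves_def by fastforce
  show ?thesis
    unfolding pi_k_def
  proof (rule the_equality)
    fix L'
    assume L': "distinct L' \<and> set L' = one_point_leaves ts \<and> sorted_wrt ?R L'"
    have asym: False if AB: "A \<in> set L'" "B \<in> set L'" "?R A B" "?R B A" for A B
    proof -
      have "A \<noteq> {}" "B \<noteq> {}"
        using nonempty AB(1,2) L' by simp_all
      then obtain a b where "a \<in> A" "b \<in> B"
        by blast
      then have "a < b" "b < a"
        using AB(3,4) by blast+
      then show False
        by simp
    qed
    show "L' = ?L"
      using L L' asym by (intro sorted_wrt_asym_unique[of ?R]) auto
  qed (fact L)
qed

text \<open>Moving every point of T anywhere inside its own leaf does not change the tree: at each
  level up to a leaf level, every cell contains the same points before and after the move.\<close>

lemma mem_dyadic_cell_moved_iff: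
  assumes "finite T" and moved: "\<And>t. t \<in> T \<Longrightarrow> \<sigma> t \<in> leaf T t"
    and "t \<in> T" "u \<in> T" "m \<le> leaf_level T u"
  shows "\<sigma> t \<in> dyadic_cell m u \<longleftrightarrow> t \<in> dyadic_cell m u"
proof (cases "m \<le> leaf_level T t")
  case True
  then have "\<sigma> t \<in> dyadic_cell m t"
    using moved[OF assms(3)] dyadic_cell_mono by (auto simp: leaf_def)
  then show ?thesis
    by (metis mem_dyadic_cell_iff)
next
  case False
  then have "t \<noteq> u"
    using assms(5) by auto
  have "u \<notin> leaf T t"
    using mem_leaf_eq[OF assms(1,3,4)] \<open>t \<noteq> u\<close> by blast
  moreover have "dyadic_cell m u \<subseteq> dyadic_cell (leaf_level T t) u"
    using False by (intro dyadic_cell_mono) simp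
  ultimately show ?thesis
    using moved[OF assms(3)] unfolding leaf_def
    by (metis mem_dyadic_cell_commute mem_dyadic_cell_iff subsetD)
qed

lemma leaf_moved_eq:
  assumes "finite T" and moved: "\<And>t. t \<in> T \<Longrightarrow> \<sigma> t \<in> leaf T t" and "u \<in> T"
  shows "leaf (\<sigma> ` T) (\<sigma> u) = leaf T u"
proof -
  let ?L = "leaf_level T u"
  have iff: "\<sigma> t \<in> dyadic_cell m u \<longleftrightarrow> t \<in> dyadic_cell m u" if "t \<in> T" "m \<le> ?L" for t m
    using mem_dyadic_cell_moved_iff[OF assms(1,2) that(1) assms(3) that(2)] .
  have "inj_on \<sigma> T"
  proof (rule inj_onI)
    fix t t' assume "t \<in> T" "t' \<in> T" "\<sigma> t = \<sigma> t'"
    then have "t \<in> leaf T t'"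
      using mem_dyadic_cell_moved_iff[OF assms(1,2), of t t' "leaf_level T t'"] moved[of t']
      by (simp add: leaf_def)
    then show "t = t'"
      using mem_leaf_eq assms(1) \<open>t \<in> T\<close> \<open>t' \<in> T\<close> by blast
  qed
  have cell: "dyadic_cell m (\<sigma> u) = dyadic_cell m u" if "m \<le> ?L" for m
    using iff[OF assms(3) that] by (simp add: mem_dyadic_cell_iff)
  have card: "card (\<sigma> ` T \<inter> dyadic_cell m (\<sigma> u)) = card (T \<inter> dyadic_cell m u)" if "m \<le> ?L" for m
  proof -
    have "\<sigma> ` T \<inter> dyadic_cell m u = \<sigma> ` (T \<inter> dyadic_cell m u)"
      using iff[OF _ that] by auto
    then show ?thesis
      using cell[OF that] \<open>inj_on \<sigma> T\<close> by (simp add: card_image inj_on_subset)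
  qed
  have "leaf_level (\<sigma> ` T) (\<sigma> u) = ?L"
    unfolding leaf_level_def[of "\<sigma> ` T"]
  proof (rule Least_equality)
    show "card (\<sigma> ` T \<inter> dyadic_cell ?L (\<sigma> u)) \<le> 1"
      using card[of ?L] card_leaf[OF assms(1,3)] by (simp add: leaf_def)
    fix m assume m: "card (\<sigma> ` T \<inter> dyadic_cell m (\<sigma> u)) \<le> 1"
    show "?L \<le> m"
    proof (rule ccontr)
      assume "\<not> ?L \<le> m"
      then have "2 \<le> card (\<sigma> ` T \<inter> dyadic_cell m (\<sigma> u))"
        using card[of m] card_dyadic_cell_below_leaf_level[of m T u] by simp
      with m show False by simp
    qed
  qed
  then show ?thesis
    using cell[of ?L] by (simp add: leaf_def)
qed

lemma im_pi_eq_map_leaf: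
  assumes "Is \<in> im_pi k"
  obtains T where "finite T" "T \<subseteq> {0..<1}" "card T = k"
    "Is = map (leaf T) (sorted_list_of_set T)"
proof -
  obtain ts where "Is = pi_k k ts" "length ts = k" "distinct ts" "set ts \<subseteq> {0..<1}"
    using assms unfolding im_pi_def by blast
  then show thesis
    using that[of "set ts"] pi_k_eq_map_leaf by (simp add: distinct_card)
qed

lemma im_pi_nth_eq_dyadic_cell:
  assumes "Is \<in> im_pi k" "i < k"
  obtains m t where "0 \<le> t" "t < 1" "Is ! i = dyadic_cell m t"
proof -
  obtain T where T: "finite T" "T \<subseteq> {0..<1}" "card T = k"
    and Is: "Is = map (leaf T) (sorted_list_of_set T)"
    by (rule im_pi_eq_map_leaf[OF assms(1)])
  let ?t = "sorted_list_of_set T ! i"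
  have "?t \<in> T"
    using T assms(2) by (metis length_sorted_list_of_set nth_mem set_sorted_list_of_set)
  then show thesis
    using that[of ?t] T assms(2) Is by (auto simp: leaf_def)
qed

lemma im_pi_nth_cell:
  assumes "Is \<in> im_pi k" "i < k"
  shows "Is ! i \<in> sets borel" "Is ! i \<subseteq> {0..<1}" "0 < measure lborel (Is ! i)"
proof -
  obtain m t where "0 \<le> t" "t < 1" "Is ! i = dyadic_cell m t"
    by (rule im_pi_nth_eq_dyadic_cell[OF assms])
  then show "Is ! i \<in> sets borel" "Is ! i \<subseteq> {0..<1}" "0 < measure lborel (Is ! i)"
    by (simp_all add: dyadic_cell_subset_unit measure_dyadic_cell)
qed

lemma im_pi_nth_less:
  assumes "Is \<in> im_pi k" "i < j" "j < k" "a \<in> Is ! i" "b \<in> Is ! j"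
  shows "a < b"
proof -
  obtain T where T: "finite T" "card T = k"
    and Is: "Is = map (leaf T) (sorted_list_of_set T)"
    by (rule im_pi_eq_map_leaf[OF assms(1)])
  let ?t = "sorted_list_of_set T"
  have mem: "?t ! l \<in> T" if "l < k" for l
    using T that by (metis length_sorted_list_of_set nth_mem set_sorted_list_of_set)
  have "?t ! i < ?t ! j"
    using T assms(2,3) sorted_wrt_nth_less[OF strict_sorted_list_of_set, of i j T] by simp
  moreover have "Is ! i = leaf T (?t ! i)" "Is ! j = leaf T (?t ! j)"
    using Is T assms(2,3) by simp_all
  ultimately show ?thesis
    using leaf_less[OF T(1) mem mem] assms by (metis order.strict_trans)
qed

lemma pi_k_sorted_list_eq_iff:
  assumes "Is \<in> im_pi k" "finite S" "S \<subseteq> {0..<1}" "card S = k"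
  shows "pi_k k (sorted_list_of_set S) = Is \<longleftrightarrow> (\<forall>i<k. sorted_list_of_set S ! i \<in> Is ! i)"
proof -
  obtain T where T: "finite T" "card T = k"
    and Is: "Is = map (leaf T) (sorted_list_of_set T)"
    by (rule im_pi_eq_map_leaf[OF assms(1)])
  define s where "s = sorted_list_of_set S"
  define t where "t = sorted_list_of_set T"
  have s: "set s = S" "distinct s" "length s = k"
    using assms(2,4) by (simp_all add: s_def)
  have t: "set t = T" "distinct t" "length t = k"
    using T by (simp_all add: t_def)
  have pi_s: "pi_k k s = map (leaf S) s"
    using pi_k_eq_map_leaf[of s k] s(1) assms(3) by (simp add: s_def)
  show ?thesis
    unfolding s_def[symmetric]
  proof
    assume "pi_k k s = Is"
    then show "\<forall>i<k. s ! i \<in> Is ! i"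
      using pi_s s(3) by (auto simp: leaf_def)
  next
    assume s_in: "\<forall>i<k. s ! i \<in> Is ! i"
    define \<sigma> where "\<sigma> x = the (map_of (zip t s) x)" for x
    have \<sigma>: "\<sigma> (t ! i) = s ! i" if "i < k" for i
      using map_of_zip_nth[of t s i] that s t by (simp add: \<sigma>_def)
    have moved: "\<sigma> x \<in> leaf T x" if x: "x \<in> T" for x
    proof -
      obtain i where i: "i < k" "x = t ! i"
        using x unfolding t(1)[symmetric] in_set_conv_nth t(3) by blast
      then have "Is ! i = leaf T x"
        using Is t by (simp add: t_def)
      then show ?thesis
        using s_in[rule_format, OF i(1)] \<sigma>[OF i(1)] i(2) by simp
    qed
    have "map \<sigma> t = s"
      using \<sigma> s t by (intro nth_equalityI) auto
    then have "\<sigma> ` T = S"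
      using s(1) t(1) by (metis set_map)
    then have "leaf S (s ! i) = leaf T (t ! i)" if "i < k" for i
      using leaf_moved_eq[OF T(1) moved, of "t ! i"] \<sigma>[OF that] t that by auto
    then show "pi_k k s = Is"
      unfolding pi_s Is t_def[symmetric] using s t by (intro nth_equalityI) auto
  qed
qed

section \<open>Sorted finite sets\<close>

lemma card_set_inter_eq_card_indices:
  assumes "distinct xs"
  shows "card (set xs \<inter> D) = card {j. j < length xs \<and> xs ! j \<in> D}"
proof -
  have "set xs \<inter> D = (!) xs ` {j. j < length xs \<and> xs ! j \<in> D}"
    by (auto simp: in_set_conv_nth)
  moreover have "inj_on ((!) xs) {j. j < length xs \<and> xs ! j \<in> D}"
    using assms by (auto simp: inj_on_def nth_eq_iff_index_eq)
  ultimately show ?thesis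
    by (simp add: card_image)
qed

lemma sorted_list_of_set_nth_le_iff:
  fixes P :: "'a::linorder set"
  assumes "finite P" "i < card P"
  shows "sorted_list_of_set P ! i \<le> a \<longleftrightarrow> Suc i \<le> card (P \<inter> {..a})"
proof -
  define s where "s = sorted_list_of_set P"
  have s: "set s = P" "distinct s" "sorted s" "length s = card P"
    using assms by (auto simp: s_def)
  define J where "J = {j. j < length s \<and> s ! j \<in> {..a}}"
  have card: "card (P \<inter> {..a}) = card J"
    using card_set_inter_eq_card_indices[OF s(2)] s(1) by (simp add: J_def)
  have "s ! i \<le> a \<longleftrightarrow> {..i} \<subseteq> J"
    using s assms(2) sorted_nth_mono[OF s(3)] by (auto simp: J_def intro: order_trans)
  also have "\<dots> \<longleftrightarrow> Suc i \<le> card J"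
  proof
    assume "{..i} \<subseteq> J"
    then show "Suc i \<le> card J"
      using card_mono[of J "{..i}"] by (simp add: J_def)
  next
    assume "Suc i \<le> card J"
    then have "\<not> J \<subseteq> {..<i}"
      using card_mono[of "{..<i}" J] by auto
    then obtain j where "j \<in> J" "i \<le> j"
      using not_less by blast
    then have "s ! i \<le> a"
      using sorted_nth_mono[OF s(3)] by (auto simp: J_def intro: order_trans)
    then show "{..i} \<subseteq> J"
      using s assms(2) sorted_nth_mono[OF s(3)] by (auto simp: J_def intro: order_trans)
  qed
  finally show ?thesis
    unfolding s_def card .
qed

text \<open>Out of range, xs ! i is an unspecified value that depends only on i - length xs.\<close>

lemma nth_ge_length: "length xs \<le> i \<Longrightarrow> xs ! i = [] ! (i - length xs)"
proof (induction xs arbitrary: i)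
  case (Cons x xs)
  then show ?case
    by (cases i) auto
qed simp

lemma sorted_list_of_set_nth_le_iff_if:
  fixes P :: "'a::linorder set"
  assumes "finite P"
  shows "sorted_list_of_set P ! i \<le> a \<longleftrightarrow>
         (if i < card P then Suc i \<le> card (P \<inter> {..a}) else [] ! (i - card P) \<le> a)"
  using sorted_list_of_set_nth_le_iff[OF assms] nth_ge_length[of "sorted_list_of_set P" i]
  by simp

lemma sorted_list_of_set_image_lessThan:
  assumes "\<And>i j. i < j \<Longrightarrow> j < k \<Longrightarrow> p i < p j"
  shows "sorted_list_of_set (p ` {..<k}) = map p [0..<k]"
proof -
  have "inj_on p {..<k}"
    using assms by (metis inj_on_def lessThan_iff linorder_neqE_nat order_less_irrefl)
  moreover have "sorted_wrt (<) (map p [0..<k])"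
    using assms by (simp add: sorted_wrt_iff_nth_less)
  ultimately show ?thesis
    by (intro sorted_list_of_set_unique[THEN iffD1])
      (auto simp: card_image sorted_wrt_map sorted_wrt_mono_rel)
qed

lemma sorted_list_of_set_in_cells_iff:
  fixes P :: "'a::linorder set" and B :: "nat \<Rightarrow> 'a set"
  assumes "finite P" "P \<subseteq> U"
    and ord: "\<And>i j a b. i < j \<Longrightarrow> j < k \<Longrightarrow> a \<in> B i \<Longrightarrow> b \<in> B j \<Longrightarrow> a < b"
  shows "card P = k \<and> (\<forall>i<k. sorted_list_of_set P ! i \<in> B i) \<longleftrightarrow>
         (\<forall>i<k. card (P \<inter> B i) = 1) \<and> card (P \<inter> (U - (\<Union>i<k. B i))) = 0"
proof
  assume h: "card P = k \<and> (\<forall>i<k. sorted_list_of_set P ! i \<in> B i)"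
  define s where "s = sorted_list_of_set P"
  have s: "set s = P" "length s = k" "\<And>i. i < k \<Longrightarrow> s ! i \<in> B i"
    using assms(1) h by (auto simp: s_def)
  have index_unique: "i = j" if "i < k" "j < k" "x \<in> B i" "x \<in> B j" for i j x
    using ord[of i j x x] ord[of j i x x] that by (cases i j rule: linorder_cases) auto
  have "P \<inter> B i = {s ! i}" if "i < k" for i
  proof
    show "P \<inter> B i \<subseteq> {s ! i}"
    proof
      fix x assume x: "x \<in> P \<inter> B i"
      then obtain j where "j < k" "x = s ! j"
        using s by (auto simp: in_set_conv_nth)
      then show "x \<in> {s ! i}"
        using index_unique[OF that] s(3) x by blast
    qed
    show "{s ! i} \<subseteq> P \<inter> B i"
      using s that by auto
  qed
  moreover have "P \<subseteq> (\<Union>i<k. B i)"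
  proof
    fix x assume "x \<in> P"
    then obtain i where "i < k" "x = s ! i"
      using s by (auto simp: in_set_conv_nth)
    then show "x \<in> (\<Union>i<k. B i)"
      using s(3) by blast
  qed
  then have "P \<inter> (U - (\<Union>i<k. B i)) = {}"
    by blast
  ultimately show "(\<forall>i<k. card (P \<inter> B i) = 1) \<and> card (P \<inter> (U - (\<Union>i<k. B i))) = 0"
    by simp

next
  assume h: "(\<forall>i<k. card (P \<inter> B i) = 1) \<and> card (P \<inter> (U - (\<Union>i<k. B i))) = 0"
  then have "\<forall>i<k. \<exists>x. P \<inter> B i = {x}"
    by (simp add: card_1_singleton_iff)
  then obtain p where p: "\<And>i. i < k \<Longrightarrow> P \<inter> B i = {p i}"
    by metis
  have "P \<subseteq> (\<Union>i<k. B i)"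
    using h assms(1,2) by auto
  then have "P = p ` {..<k}"
    using p by blast
  moreover have "p i < p j" if "i < j" "j < k" for i j
    using ord[OF that] p[of i] p[of j] that by auto
  ultimately have sorted: "sorted_list_of_set P = map p [0..<k]"
    by (simp add: sorted_list_of_set_image_lessThan)
  then have "card P = k"
    using length_sorted_list_of_set[of P] by simp
  moreover have "sorted_list_of_set P ! i \<in> B i" if "i < k" for i
    using sorted p[OF that] that by auto
  ultimately show "card P = k \<and> (\<forall>i<k. sorted_list_of_set P ! i \<in> B i)"
    by blast

qed

section \<open>Poisson point processes on [0,1)\<close>

lemma emeasure_uniform_measure_eq_ennreal:
  assumes "A \<in> sets M" "B \<in> sets M" "emeasure M A \<noteq> top" "0 < measure M A"
  shows "emeasure (uniform_measure M A) B = ennreal (measure M (A \<inter> B) / measure M A)"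
proof -
  have "emeasure M (A \<inter> B) \<le> emeasure M A"
    using assms by (intro emeasure_mono) auto
  then have "emeasure M (A \<inter> B) = ennreal (measure M (A \<inter> B))"
    using assms(3) by (intro emeasure_eq_ennreal_measure) (auto simp: top_unique)
  moreover have "emeasure M A = ennreal (measure M A)"
    using assms(3) by (simp add: emeasure_eq_ennreal_measure)
  ultimately show ?thesis
    using assms by (simp add: divide_ennreal)
qed

lemma poisson_pp_prob_space: "poisson_pp M lam P \<Longrightarrow> prob_space M"
  by (simp add: poisson_pp_def)

lemma poisson_pp_finite:
  "poisson_pp M lam P \<Longrightarrow> \<omega> \<in> space M \<Longrightarrow> finite (P \<omega>) \<and> P \<omega> \<subseteq> {0..<1}"
  by (simp add: poisson_pp_def)

lemma poisson_pp_count_event: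
  assumes "poisson_pp M lam P" "A \<in> sets borel" "A \<subseteq> {0..<1}"
  shows "{\<omega>\<in>space M. Q (card (P \<omega> \<inter> A))} \<in> sets M"
proof -
  have "(\<lambda>\<omega>. card (P \<omega> \<inter> A)) \<in> measurable M (count_space UNIV)"
    using assms by (simp add: poisson_pp_def)
  from measurable_sets[OF this, of "{n. Q n}"] show ?thesis
    by (simp add: vimage_def Int_def conj_commute)
qed

lemma poisson_pp_count_distribution:
  assumes "poisson_pp M lam P" "A \<in> sets borel" "A \<subseteq> {0..<1}"
  shows "measure M {\<omega>\<in>space M. card (P \<omega> \<inter> A) = n} =
           (lam * measure lborel A) ^ n / fact n * exp (- lam * measure lborel A)"
  using assms by (simp add: poisson_pp_def)

lemma poisson_pp_indep_counts:
  fixes As :: "nat \<Rightarrow> real set"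
  assumes "poisson_pp M lam P"
    and "\<And>i. i < n \<Longrightarrow> As i \<in> sets borel" "\<And>i. i < n \<Longrightarrow> As i \<subseteq> {0..<1}"
    and "disjoint_family_on As {..<n}"
  shows "prob_space.indep_vars M (\<lambda>_. count_space UNIV) (\<lambda>i \<omega>. card (P \<omega> \<inter> As i)) {..<n}"
proof -
  have "\<forall>(As :: nat \<Rightarrow> real set) n. (\<forall>i<n. As i \<in> sets borel \<and> As i \<subseteq> {0..<1}) \<and>
          disjoint_family_on As {..<n} \<longrightarrow>
          prob_space.indep_vars M (\<lambda>_. count_space UNIV) (\<lambda>i \<omega>. card (P \<omega> \<inter> As i)) {..<n}"
    using assms(1) by (simp add: poisson_pp_def)
  then show ?thesis
    using assms(2-4) by blast
qed

lemma poisson_pp_joint_counts: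
  fixes As :: "nat \<Rightarrow> real set"
  assumes pp: "poisson_pp M lam P"
    and As: "\<And>i. i < n \<Longrightarrow> As i \<in> sets borel" "\<And>i. i < n \<Longrightarrow> As i \<subseteq> {0..<1}"
    and disj: "disjoint_family_on As {..<n}"
  shows "{\<omega>\<in>space M. \<forall>i<n. card (P \<omega> \<inter> As i) = c i} \<in> sets M"
    and "measure M {\<omega>\<in>space M. \<forall>i<n. card (P \<omega> \<inter> As i) = c i} =
           (\<Prod>i<n. (lam * measure lborel (As i)) ^ c i / fact (c i)
                    * exp (- lam * measure lborel (As i)))"
proof -
  interpret prob_space M
    using pp by (rule poisson_pp_prob_space)
  let ?E = "{\<omega>\<in>space M. \<forall>i<n. card (P \<omega> \<inter> As i) = c i}"
  let ?X = "\<lambda>i \<omega>. card (P \<omega> \<inter> As i)"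
  have single: "?X i -` {c i} \<inter> space M = {\<omega>\<in>space M. card (P \<omega> \<inter> As i) = c i}" for i
    by auto
  have "{\<omega>\<in>space M. card (P \<omega> \<inter> As i) = c i} \<in> sets M" if "i < n" for i
    using As[OF that] by (rule poisson_pp_count_event[OF pp])
  then have "{\<omega>\<in>space M. \<forall>i\<in>{..<n}. card (P \<omega> \<inter> As i) = c i} \<in> sets M"
    by (intro sets.sets_Collect_finite_All) auto
  then show "?E \<in> sets M"
    unfolding Ball_def lessThan_iff .
  show "measure M ?E = (\<Prod>i<n. (lam * measure lborel (As i)) ^ c i / fact (c i)
                                  * exp (- lam * measure lborel (As i)))"
  proof (cases "n = 0")
    case True
    then show ?thesis
      by (simp add: prob_space)
  next
    case False
    have indep: "indep_vars (\<lambda>_. count_space UNIV) ?X {..<n}"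
      using pp As disj by (rule poisson_pp_indep_counts)
    have "measure M ?E = prob (\<Inter>i\<in>{..<n}. ?X i -` {c i} \<inter> space M)"
      using False by (intro arg_cong[where f = prob]) auto
    also have "\<dots> = (\<Prod>i<n. prob (?X i -` {c i} \<inter> space M))"
      using False by (intro indep_varsD_finite[OF indep]) auto
    also have "\<dots> = (\<Prod>i<n. (lam * measure lborel (As i)) ^ c i / fact (c i)
                                  * exp (- lam * measure lborel (As i)))"
      unfolding single using As by (intro prod.cong poisson_pp_count_distribution[OF pp]) auto
    finally show ?thesis .
  qed
qed

lemma poisson_pp_one_point_in_each_cell:
  assumes pp: "poisson_pp M lam P"
    and B: "\<And>i. i < k \<Longrightarrow> B i \<in> sets borel" "\<And>i. i < k \<Longrightarrow> B i \<subseteq> {0..<1}"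
    and disj: "disjoint_family_on B {..<k}"
  shows "{\<omega>\<in>space M. (\<forall>i<k. card (P \<omega> \<inter> B i) = 1) \<and>
            card (P \<omega> \<inter> ({0..<1} - (\<Union>i<k. B i))) = 0} \<in> sets M"
    and "measure M {\<omega>\<in>space M. (\<forall>i<k. card (P \<omega> \<inter> B i) = 1) \<and>
            card (P \<omega> \<inter> ({0..<1} - (\<Union>i<k. B i))) = 0} =
           lam ^ k * (\<Prod>i<k. measure lborel (B i)) * exp (- lam)"
proof -
  let ?E = "{\<omega>\<in>space M. (\<forall>i<k. card (P \<omega> \<inter> B i) = 1) \<and>
            card (P \<omega> \<inter> ({0..<1} - (\<Union>i<k. B i))) = 0}"
  define R where "R = {0..<1} - (\<Union>i<k. B i)"
  define As where "As i = (if i < k then B i else R)" for i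
  define c where "c i = (if i < k then 1 else 0 :: nat)" for i
  have E: "?E = {\<omega>\<in>space M. \<forall>i<Suc k. card (P \<omega> \<inter> As i) = c i}"
    unfolding All_less_Suc by (auto simp: As_def c_def R_def)
  have R: "R \<in> sets borel" "R \<subseteq> {0..<1}"
    using B by (auto simp: R_def)
  have As: "\<And>i. i < Suc k \<Longrightarrow> As i \<in> sets borel" "\<And>i. i < Suc k \<Longrightarrow> As i \<subseteq> {0..<1}"
    using B R by (auto simp: As_def)
  have "disjoint_family_on As {..<Suc k}"
    using disj unfolding disjoint_family_on_def by (auto simp: As_def R_def)
  note counts = poisson_pp_joint_counts[OF pp As this, where c = c]
  show "?E \<in> sets M"
    unfolding E by (rule counts(1))
  have finite: "emeasure lborel A \<noteq> top" if "A \<subseteq> {0..<1}" for A :: "real set"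
    using emeasure_mono[OF that, of lborel] by (auto simp: top_unique)
  have "measure lborel (\<Union>i<k. B i) = (\<Sum>i<k. measure lborel (B i))"
    using B disj finite by (intro measure_finite_Union) (auto simp: disjoint_family_on_def)
  then have measure_R: "measure lborel R = 1 - (\<Sum>i<k. measure lborel (B i))"
    unfolding R_def using B by (subst measure_Diff) auto
  have "measure M ?E = (\<Prod>i<Suc k. (lam * measure lborel (As i)) ^ c i / fact (c i)
                                  * exp (- lam * measure lborel (As i)))"
    unfolding E by (rule counts(2))
  also have "\<dots> = (\<Prod>i<k. lam * measure lborel (B i) * exp (- lam * measure lborel (B i)))
                        * exp (- lam * measure lborel R)"
    by (simp add: As_def c_def)
  also have "\<dots> = lam ^ k * (\<Prod>i<k. measure lborel (B i))
                    * exp (- lam * (\<Sum>i<k. measure lborel (B i))) * exp (- lam * measure lborel R)"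
    by (simp add: prod.distrib exp_sum sum_distrib_left)
  also have "\<dots> = lam ^ k * (\<Prod>i<k. measure lborel (B i)) * exp (- lam)"
    unfolding measure_R mult.assoc exp_add[symmetric] by (simp add: algebra_simps)
  finally show "measure M ?E = lam ^ k * (\<Prod>i<k. measure lborel (B i)) * exp (- lam)" .
qed

lemma poisson_pp_sorted_in_cells:
  assumes pp: "poisson_pp M lam P"
    and B: "\<And>i. i < k \<Longrightarrow> B i \<in> sets borel" "\<And>i. i < k \<Longrightarrow> B i \<subseteq> {0..<1}"
    and ord: "\<And>i j a b. i < j \<Longrightarrow> j < k \<Longrightarrow> a \<in> B i \<Longrightarrow> b \<in> B j \<Longrightarrow> a < b"
  shows "{\<omega>\<in>space M. card (P \<omega>) = k \<and> (\<forall>i<k. sorted_list_of_set (P \<omega>) ! i \<in> B i)} \<in> sets M"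
      (is "?E \<in> _")
    and "measure M {\<omega>\<in>space M. card (P \<omega>) = k \<and> (\<forall>i<k. sorted_list_of_set (P \<omega>) ! i \<in> B i)}
           = lam ^ k * (\<Prod>i<k. measure lborel (B i)) * exp (- lam)"
proof -
  have "disjoint_family_on B {..<k}"
    unfolding disjoint_family_on_def
    by (metis disjoint_iff lessThan_iff linorder_neqE_nat ord order_less_irrefl)
  note cells = poisson_pp_one_point_in_each_cell[OF pp B this]
  have event: "?E = {\<omega>\<in>space M. (\<forall>i<k. card (P \<omega> \<inter> B i) = 1) \<and>
            card (P \<omega> \<inter> ({0..<1} - (\<Union>i<k. B i))) = 0}"
  proof (rule Collect_cong, rule conj_cong[OF refl])
    fix \<omega> assume "\<omega> \<in> space M"
    with poisson_pp_finite[OF pp] show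
      "card (P \<omega>) = k \<and> (\<forall>i<k. sorted_list_of_set (P \<omega>) ! i \<in> B i) \<longleftrightarrow>
       (\<forall>i<k. card (P \<omega> \<inter> B i) = 1) \<and> card (P \<omega> \<inter> ({0..<1} - (\<Union>i<k. B i))) = 0"
      by (intro sorted_list_of_set_in_cells_iff[OF _ _ ord]) auto
  qed
  show "?E \<in> sets M"
    unfolding event by (rule cells(1))
  show "measure M ?E = lam ^ k * (\<Prod>i<k. measure lborel (B i)) * exp (- lam)"
    unfolding event by (rule cells(2))
qed

lemma poisson_pp_sorted_nth_measurable:
  assumes pp: "poisson_pp M lam P"
  shows "(\<lambda>\<omega>. sorted_list_of_set (P \<omega>) ! i) \<in> borel_measurable M"
proof (rule borel_measurableI_le)
  fix a :: real
  text \<open>Counts are only known to be measurable for subsets of [0,1), hence the intersections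
    with {0..<1}.\<close>
  define G where "G n = {\<omega>\<in>space M. card (P \<omega> \<inter> {0..<1}) = n} \<inter>
      (if i < n then {\<omega>\<in>space M. Suc i \<le> card (P \<omega> \<inter> ({0..<1} \<inter> {..a}))}
       else if [] ! (i - n) \<le> a then space M else {})" for n
  have "G n \<in> sets M" for n
    unfolding G_def by (auto intro!: poisson_pp_count_event[OF pp])
  moreover have "\<omega> \<in> G n \<longleftrightarrow> card (P \<omega>) = n \<and> sorted_list_of_set (P \<omega>) ! i \<le> a"
    if "\<omega> \<in> space M" for \<omega> n
  proof -
    have "P \<omega> \<inter> {0..<1} = P \<omega>" "P \<omega> \<inter> ({0..<1} \<inter> {..a}) = P \<omega> \<inter> {..a}"
      using poisson_pp_finite[OF pp that] by auto
    then show ?thesis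
      using that sorted_list_of_set_nth_le_iff_if[of "P \<omega>" i a] poisson_pp_finite[OF pp that]
      by (auto simp: G_def)
  qed
  then have "{\<omega>\<in>space M. sorted_list_of_set (P \<omega>) ! i \<le> a} = (\<Union>n. G n)"
    by (auto simp: G_def)
  ultimately show "{\<omega>\<in>space M. sorted_list_of_set (P \<omega>) ! i \<le> a} \<in> sets M"
    by auto
qed

theorem poisson_pp_conditional_uniform:
  assumes pp: "poisson_pp M lam P" and "0 < lam"
    and I: "\<And>i. i < k \<Longrightarrow> I i \<in> sets borel" "\<And>i. i < k \<Longrightarrow> I i \<subseteq> {0..<1}"
      "\<And>i. i < k \<Longrightarrow> 0 < measure lborel (I i)"
    and ord: "\<And>i j a b. i < j \<Longrightarrow> j < k \<Longrightarrow> a \<in> I i \<Longrightarrow> b \<in> I j \<Longrightarrow> a < b"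
  shows "distr (uniform_measure M
             {\<omega>\<in>space M. card (P \<omega>) = k \<and> (\<forall>i<k. sorted_list_of_set (P \<omega>) ! i \<in> I i)})
           (PiM {..<k} (\<lambda>_. lborel)) (\<lambda>\<omega>. \<lambda>i\<in>{..<k}. sorted_list_of_set (P \<omega>) ! i)
         = PiM {..<k} (\<lambda>i. uniform_measure lborel (I i))"
proof -
  interpret prob_space M
    using pp by (rule poisson_pp_prob_space)
  define E where "E B = {\<omega>\<in>space M. card (P \<omega>) = k \<and> (\<forall>i<k. sorted_list_of_set (P \<omega>) ! i \<in> B i)}"
    for B :: "nat \<Rightarrow> real set"
  define f where "f \<omega> = (\<lambda>i\<in>{..<k}. sorted_list_of_set (P \<omega>) ! i)" for \<omega>
  define J where "J i = (if i < k then I i else {0..<1})" for i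
  let ?N = "PiM {..<k} (\<lambda>_. lborel) :: (nat \<Rightarrow> real) measure"
  have prob_E: "E B \<in> events" "prob (E B) = lam ^ k * (\<Prod>i<k. measure lborel (B i)) * exp (- lam)"
    if B: "\<And>i. i < k \<Longrightarrow> B i \<in> sets borel" "\<And>i. i < k \<Longrightarrow> B i \<subseteq> I i" for B
  proof -
    have B01: "B i \<subseteq> {0..<1}" if "i < k" for i
      using B(2)[OF that] I(2)[OF that] by (rule order.trans)
    have ordB: "a < b" if "i < j" "j < k" "a \<in> B i" "b \<in> B j" for i j a b
      using B(2)[of i] B(2)[of j] that by (intro ord[OF that(1,2)]) auto
    note cells = poisson_pp_sorted_in_cells[OF pp B(1) B01 ordB]
    show "E B \<in> events"
      unfolding E_def by (rule cells(1))
    show "prob (E B) = lam ^ k * (\<Prod>i<k. measure lborel (B i)) * exp (- lam)"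
      unfolding E_def by (rule cells(2))
  qed
  have "0 < (\<Prod>i<k. measure lborel (I i))"
    using I(3) by (intro prod_pos) simp
  then have "0 < prob (E I)"
    using prob_E[of I] I(1) \<open>0 < lam\<close> by simp
  have f: "f \<in> measurable (uniform_measure M (E I)) ?N"
    unfolding f_def measurable_cong_sets[OF sets_uniform_measure refl]
    by (intro measurable_restrict) (simp add: poisson_pp_sorted_nth_measurable[OF pp])
  have J: "J i \<in> sets borel" "emeasure lborel (J i) \<noteq> top" "0 < measure lborel (J i)" for i
    using I emeasure_mono[of "J i" "{0..<1}" lborel] by (auto simp: J_def top_unique)
  have "prob_space (uniform_measure lborel (J i))" for i
    using J(2,3)[of i]
    by (intro prob_space_uniform_measure) (auto simp: emeasure_eq_ennreal_measure)
  then interpret product_sigma_finite "\<lambda>i. uniform_measure lborel (J i)"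
    unfolding product_sigma_finite_def by (simp add: prob_space_imp_sigma_finite)
  have "distr (uniform_measure M (E I)) ?N f = PiM {..<k} (\<lambda>i. uniform_measure lborel (J i))"
  proof (rule PiM_eqI)
    show "sets (distr (uniform_measure M (E I)) ?N f) =
        sets (PiM {..<k} (\<lambda>i. uniform_measure lborel (J i)))"
      unfolding sets_distr by (rule sets_PiM_cong) simp_all
    fix A assume A: "\<And>i. i \<in> {..<k} \<Longrightarrow> A i \<in> sets (uniform_measure lborel (J i))"
    define B where "B i = I i \<inter> A i" for i
    have box: "Pi\<^sub>E {..<k} A \<in> sets ?N"
      using A by (intro sets_PiM_I_finite) auto
    have preimage: "E I \<inter> (f -` Pi\<^sub>E {..<k} A \<inter> space M) = E B"
      by (auto simp: E_def B_def f_def PiE_iff)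
    have "emeasure (distr (uniform_measure M (E I)) ?N f) (Pi\<^sub>E {..<k} A)
        = emeasure (uniform_measure M (E I)) (f -` Pi\<^sub>E {..<k} A \<inter> space M)"
      using emeasure_distr[OF f box] by simp
    also have "\<dots> = ennreal (prob (E B) / prob (E I))"
      unfolding preimage[symmetric] using measurable_sets[OF f box] \<open>0 < prob (E I)\<close> prob_E[of I] I
      by (intro emeasure_uniform_measure_eq_ennreal) auto
    also have
 "prob (E B) / prob (E I) = (\<Prod>i<k. measure lborel (B i) / measure lborel (I i))"
      using prob_E[of B] prob_E[of I] A I \<open>0 < lam\<close> by (simp add: B_def prod_dividef)
    also have "ennreal \<dots> = (\<Prod>i<k. ennreal (measure lborel (B i) / measure lborel (I i)))"
      by (rule prod_ennreal[symmetric]) simp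
    also have "\<dots> = (\<Prod>i<k. emeasure (uniform_measure lborel (J i)) (A i))"
    proof (rule prod.cong[OF refl])
      fix i assume "i \<in> {..<k}"
      then show "ennreal (measure lborel (B i) / measure lborel (I i)) =
          emeasure (uniform_measure lborel (J i)) (A i)"
        using A[of i] J[of i]
        by (simp add: B_def J_def emeasure_uniform_measure_eq_ennreal del: emeasure_uniform_measure)
    qed
    finally show "emeasure (distr (uniform_measure M (E I)) ?N f) (Pi\<^sub>E {..<k} A) =
        (\<Prod>i\<in>{..<k}. emeasure (uniform_measure lborel (J i)) (A i))" .
  qed simp
  also have "\<dots> = PiM {..<k} (\<lambda>i. uniform_measure lborel (I i))"
    by (rule PiM_cong) (auto simp: J_def)
  finally show ?thesis
    unfolding E_def f_def .
qed

theorem lemma5: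
  fixes M :: "'a measure" and X :: "'a \<Rightarrow> real \<Rightarrow> 'e" and lam :: real
    and k :: nat and Is :: "real set list"
  assumes "prob_space M"
    and "\<forall>\<omega>\<in>space M. X \<omega> \<in> Dspace"
    and "lam > 0"
    and "poisson_pp M lam (\<lambda>\<omega>. jumps (X \<omega>))"
    and "k \<ge> 1"
    and "Is \<in> im_pi k"
  shows "distr (uniform_measure M {\<omega>\<in>space M. njumps (X \<omega>) = k \<and>
                   pi_k k (take k (jump_list (X \<omega>))) = Is})
               (PiM {..<k} (\<lambda>_. lborel)) (\<lambda>\<omega>. \<lambda>i\<in>{..<k}. jump_list (X \<omega>) ! i)
         = PiM {..<k} (\<lambda>i. uniform_measure lborel (Is ! i))"
proof -
  have "{\<omega>\<in>space M. njumps (X \<omega>) = k \<and> pi_k k (take k (jump_list (X \<omega>))) = Is} =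
        {\<omega>\<in>space M. card (jumps (X \<omega>)) = k \<and>
            (\<forall>i<k. sorted_list_of_set (jumps (X \<omega>)) ! i \<in> Is ! i)}"
  proof (rule Collect_cong, rule conj_cong[OF refl])
    fix \<omega> assume \<omega>: "\<omega> \<in> space M"
    show "njumps (X \<omega>) = k \<and> pi_k k (take k (jump_list (X \<omega>))) = Is \<longleftrightarrow>
        card (jumps (X \<omega>)) = k \<and> (\<forall>i<k. sorted_list_of_set (jumps (X \<omega>)) ! i \<in> Is ! i)"
    proof (cases "card (jumps (X \<omega>)) = k")
      case True
      then show ?thesis
        using pi_k_sorted_list_eq_iff[OF assms(6), of "jumps (X \<omega>)"]
          poisson_pp_finite[OF assms(4) \<omega>]
        by (simp add: njumps_def jump_list_def)
    qed (simp add: njumps_def)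
  qed
  then show ?thesis
    unfolding jump_list_def
    using poisson_pp_conditional_uniform[OF assms(4,3) im_pi_nth_cell[OF assms(6)]
        im_pi_nth_less[OF assms(6)]]
    by simp
qed

end
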